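(* Let $(X,\mathscr{A},\mu)$ be a $\sigma$-finite measure space, $\phi$ a nonsingular transformation of $X$ with $0<\mathsf{h}_\phi<\infty$ a.e. $[\mu]$, and $P\colon X\times\mathfrak{B}(\mathbb{R}_+)\to[0,1]$ an $\mathscr{A}$-measurable family of probability measures satisfying (CC): $\mathsf{E}(P(\cdot,\sigma))(x)=\dfrac{\int_\sigma t\,P(\phi(x),\mathrm{d}t)}{\mathsf{h}_\phi(\phi(x))}$ for $\mu$-a.e. $x\in X$, for every $\sigma\in\mathfrak{B}(\mathbb{R}_+)$. Then for every $n\in\mathbb{Z}_+$, $\mathsf{h}_{\phi^n}(x)=\int_0^\infty t^n\,P(x,\mathrm{d}t)$ for $\mu$-a.e. $x\in X$. Moreover, if $C_\phi^n$ is densely defined for every $n\in\mathbb{Z}_+$, then for $\mu$-a.e. $x\in X$ the sequence $\{\mathsf{h}_{\phi^n}(x)\}_{n=0}^\infty$ is a Stieltjes moment sequence with representing measure $P(x,\cdot)$.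
   Context: $\mathbb{R}_+=[0,\infty)$, $\mathbb{Z}_+=\{0,1,2,\dots\}$. Conventions: $0\cdot\infty=0$, $1/0=\infty$, $0/0=1$. Nonsingular transformation: $\phi^{-1}(\Delta)\in\mathscr{A}$ for $\Delta\in\mathscr{A}$ and $\mu(\phi^{-1}(\Delta))=0$ when $\mu(\Delta)=0$. $\phi^n$ is the $n$-fold composition ($\phi^0=\mathrm{id}_X$), and $\mathsf{h}_{\phi^n}$ is the Radon–Nikodym derivative of $\Delta\mapsto\mu((\phi^n)^{-1}(\Delta))$ w.r.t. $\mu$. $C_\phi f=f\circ\phi$ on $\{f\in L^2(\mu):f\circ\phi\in L^2(\mu)\}$. $\mathsf{E}(f)$ is the conditional expectation of an $\mathscr{A}$-measurable $f\colon X\to[0,\infty]$ w.r.t. $\phi^{-1}(\mathscr{A})$: the a.e. unique $\phi^{-1}(\mathscr{A})$-measurable function with $\int(g\circ\phi)f\,\mathrm{d}\mu=\int(g\circ\phi)\mathsf{E}(f)\,\mathrm{d}\mu$ for every $\mathscr{A}$-measurable $g\ge0$. An $\mathscr{A}$-measurable family of probability measures: each $P(x,\cdot)$ a Borel probability measure on $\mathbb{R}_+$, each $P(\cdot,\sigma)$ $\mathscr{A}$-measurable. A sequence $\{a_n\}_{n\ge0}$ is a Stieltjes moment sequence with representing measure $\nu$ if $\nu$ is a Borel measure on $\mathbb{R}_+$ with $a_n=\int_0^\infty s^n\nu(\mathrm{d}s)$ for all $n$. *)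

theory Defs
  imports "HOL-Probability.Probability"
begin

definition nonsingular :: "'a measure \<Rightarrow> ('a \<Rightarrow> 'a) \<Rightarrow> bool" where
  "nonsingular M \<phi> \<longleftrightarrow> \<phi> \<in> measurable M M \<and>
     (\<forall>A\<in>sets M. emeasure M A = 0 \<longrightarrow> emeasure M (\<phi> -` A \<inter> space M) = 0)"

definition hphi :: "'a measure \<Rightarrow> ('a \<Rightarrow> 'a) \<Rightarrow> nat \<Rightarrow> 'a \<Rightarrow> ennreal" where
  "hphi M \<phi> n = RN_deriv M (distr M M (\<phi> ^^ n))"

definition is_cond_exp_phi :: "'a measure \<Rightarrow> ('a \<Rightarrow> 'a) \<Rightarrow> ('a \<Rightarrow> ennreal) \<Rightarrow> ('a \<Rightarrow> ennreal) \<Rightarrow> bool" where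
  "is_cond_exp_phi M \<phi> f g \<longleftrightarrow>
     g \<in> borel_measurable (vimage_algebra (space M) \<phi> M) \<and>
     (\<forall>u \<in> borel_measurable M.
        (\<integral>\<^sup>+ x. u (\<phi> x) * f x \<partial>M) = (\<integral>\<^sup>+ x. u (\<phi> x) * g x \<partial>M))"

definition cond_exp_phi :: "'a measure \<Rightarrow> ('a \<Rightarrow> 'a) \<Rightarrow> ('a \<Rightarrow> ennreal) \<Rightarrow> 'a \<Rightarrow> ennreal" where
  "cond_exp_phi M \<phi> f = (SOME g. is_cond_exp_phi M \<phi> f g)"

abbreviation borel_Rplus :: "real measure" where
  "borel_Rplus \<equiv> restrict_space borel {0..}"

definition measurable_prob_family :: "'a measure \<Rightarrow> ('a \<Rightarrow> real measure) \<Rightarrow> bool" where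
  "measurable_prob_family M P \<longleftrightarrow>
     (\<forall>x\<in>space M. prob_space (P x) \<and> sets (P x) = sets borel_Rplus) \<and>
     (\<forall>\<sigma>\<in>sets borel_Rplus. (\<lambda>x. emeasure (P x) \<sigma>) \<in> borel_measurable M)"

definition stieltjes_moment_seq :: "(nat \<Rightarrow> real) \<Rightarrow> real measure \<Rightarrow> bool" where
  "stieltjes_moment_seq a \<nu> \<longleftrightarrow> sets \<nu> = sets borel_Rplus \<and>
     (\<forall>n. integrable \<nu> (\<lambda>s. s ^ n) \<and> a n = (\<integral>s. s ^ n \<partial>\<nu>))"

definition sq_int :: "'a measure \<Rightarrow> ('a \<Rightarrow> complex) \<Rightarrow> bool" where
  "sq_int M f \<longleftrightarrow> f \<in> borel_measurable M \<and> integrable M (\<lambda>x. (norm (f x))\<^sup>2)"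

definition dom_Cphi_pow :: "'a measure \<Rightarrow> ('a \<Rightarrow> 'a) \<Rightarrow> nat \<Rightarrow> ('a \<Rightarrow> complex) set" where
  "dom_Cphi_pow M \<phi> n = {f. sq_int M f \<and> (\<forall>k\<le>n. sq_int M (\<lambda>x. f ((\<phi> ^^ k) x)))}"

definition Cphi_pow_densely_defined :: "'a measure \<Rightarrow> ('a \<Rightarrow> 'a) \<Rightarrow> nat \<Rightarrow> bool" where
  "Cphi_pow_densely_defined M \<phi> n \<longleftrightarrow>
     (\<forall>g. sq_int M g \<longrightarrow> (\<forall>\<epsilon>>0. \<exists>f\<in>dom_Cphi_pow M \<phi> n.
        (\<integral>x. (norm (f x - g x))\<^sup>2 \<partial>M) < \<epsilon>))"

end

theory Submission
  imports Defs
begin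

text \<open>Testing the consistency condition (CC) against functions \<open>u \<circ> \<phi>\<close> and changing variables
  with \<open>h\<^sub>\<phi>\<close> gives \<open>\<integral> (u \<circ> \<phi>) P(\<cdot>,\<sigma>) d\<mu> = \<integral> u \<integral>\<^sub>\<sigma> t P(\<cdot>,dt) d\<mu>\<close>; since both sides are integrals
  against measures on \<open>\<real>\<^sub>+\<close>, this extends from indicators to all \<open>F\<close>:
  \<open>\<integral> (u \<circ> \<phi>) \<integral> F dP d\<mu> = \<integral> u \<integral> t F(t) dP d\<mu>\<close>. Induction on \<open>n\<close> with \<open>F(t) = t\<^sup>n\<close> then yields
  \<open>\<integral> u \<circ> \<phi>\<^sup>n d\<mu> = \<integral> u \<integral> t\<^sup>n dP d\<mu>\<close>, i.e. the \<open>n\<close>-th moment of \<open>P(x,\<cdot>)\<close> is the density \<open>h\<^sub>\<phi>\<^sub>\<^sup>n\<close>.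
  Every \<open>f\<close> with \<open>f \<circ> \<phi>\<^sup>n \<in> L\<^sup>2\<close> vanishes where this moment is infinite, so if such \<open>f\<close> are dense
  that set is null, and finite moments make \<open>h\<^sub>\<phi>\<^sub>\<^sup>n(x)\<close> a Stieltjes moment sequence.\<close>

lemma subalgebra_vimage_algebra:
  assumes "f \<in> M \<rightarrow>\<^sub>M N"
  shows "subalgebra M (vimage_algebra (space M) f N)"
  using assms by (auto simp: subalgebra_def sets_vimage_algebra2 measurable_def)

lemma sigma_finite_subalgebra_vimage_algebra:
  assumes f: "f \<in> M \<rightarrow>\<^sub>M N" and fin: "sigma_finite_measure (distr M N f)"
  shows "sigma_finite_subalgebra M (vimage_algebra (space M) f N)"
proof -
  let ?F = "vimage_algebra (space M) f N"
  have sub: "subalgebra M ?F" by (rule subalgebra_vimage_algebra[OF f])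
  have sets_F: "sets ?F = {f -` A \<inter> space M |A. A \<in> sets N}"
    using f by (intro sets_vimage_algebra2) (auto simp: measurable_def)
  obtain C where C: "countable C" "C \<subseteq> sets N" "\<Union>C = space N"
      "\<forall>c\<in>C. emeasure (distr M N f) c \<noteq> \<infinity>"
    using sigma_finite_measure.sigma_finite_countable[OF fin] by auto
  have "sigma_finite_measure (restr_to_subalg M ?F)"
  proof (unfold_locales, intro exI[of _ "(\<lambda>c. f -` c \<inter> space M) ` C"] conjI)
    show "countable ((\<lambda>c. f -` c \<inter> space M) ` C)" using C(1) by simp
    show "(\<lambda>c. f -` c \<inter> space M) ` C \<subseteq> sets (restr_to_subalg M ?F)"
      using C(2) by (auto simp: sets_restr_to_subalg[OF sub] sets_F)
    show "\<Union> ((\<lambda>c. f -` c \<inter> space M) ` C) = space (restr_to_subalg M ?F)"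
      using measurable_space[OF f] by (auto simp: space_restr_to_subalg C(3)[symmetric])
    show "\<forall>a\<in>(\<lambda>c. f -` c \<inter> space M) ` C. emeasure (restr_to_subalg M ?F) a \<noteq> \<infinity>"
    proof
      fix a assume "a \<in> (\<lambda>c. f -` c \<inter> space M) ` C"
      then obtain c where c: "c \<in> C" "a = f -` c \<inter> space M" by auto
      have cN: "c \<in> sets N" using C(2) c by auto
      then have "a \<in> sets ?F" using c by (auto simp: sets_F)
      then show "emeasure (restr_to_subalg M ?F) a \<noteq> \<infinity>"
        using bspec[OF C(4) c(1)] c(2)
        by (simp add: emeasure_restr_to_subalg[OF sub] emeasure_distr[OF f cN])
    qed
  qed
  then show ?thesis using sub by (simp add: sigma_finite_subalgebra_def)
qed

text \<open>Both sides are integrals of \<open>F\<close> against measures on \<open>B\<close>, namely \<open>density M w \<bind> K\<close> and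
  \<open>density (density M v \<bind> K) g\<close>; the hypothesis says these agree on every measurable set.\<close>
lemma nn_integral_kernel_eqI:
  assumes K: "K \<in> M \<rightarrow>\<^sub>M subprob_algebra B"
    and [measurable]: "w \<in> borel_measurable M" "v \<in> borel_measurable M"
    and g[measurable]: "g \<in> borel_measurable B"
    and eq: "\<And>A. A \<in> sets B \<Longrightarrow>
      (\<integral>\<^sup>+x. w x * emeasure (K x) A \<partial>M) = (\<integral>\<^sup>+x. v x * (\<integral>\<^sup>+t. g t * indicator A t \<partial>K x) \<partial>M)"
    and [measurable]: "F \<in> borel_measurable B"
  shows "(\<integral>\<^sup>+x. w x * (\<integral>\<^sup>+t. F t \<partial>K x) \<partial>M) = (\<integral>\<^sup>+x. v x * (\<integral>\<^sup>+t. g t * F t \<partial>K x) \<partial>M)"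
proof (cases "space M = {}")
  case True
  then show ?thesis by (simp add: nn_integral_empty)
next
  case False
  have nn_integral_bind_density: "(\<integral>\<^sup>+t. G t \<partial>(density M u \<bind> K)) = (\<integral>\<^sup>+x. u x * (\<integral>\<^sup>+t. G t \<partial>K x) \<partial>M)"
    if u: "u \<in> borel_measurable M" and G: "G \<in> borel_measurable B" for u G
  proof -
    have "K \<in> density M u \<rightarrow>\<^sub>M subprob_algebra B"
      using K measurable_cong_sets[OF sets_density refl] by auto
    moreover have "(\<lambda>x. \<integral>\<^sup>+t. G t \<partial>K x) \<in> borel_measurable M"
      using measurable_comp[OF K nn_integral_measurable_subprob_algebra[OF G]] by (simp add: o_def)
    ultimately show ?thesis by (simp add: nn_integral_bind[OF G] nn_integral_density u)
  qed
  have sets_bind_K: "sets (density M u \<bind> K) = sets B" for u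
    by (rule sets_bind) (use subprob_measurableD(2)[OF K] False in auto)
  have g_bind: "g \<in> borel_measurable (density M v \<bind> K)"
    by (subst measurable_cong_sets[OF sets_bind_K refl]) (rule g)
  have "density M w \<bind> K = density (density M v \<bind> K) g"
  proof (rule measure_eqI)
    show "sets (density M w \<bind> K) = sets (density (density M v \<bind> K) g)"
      by (simp add: sets_bind_K)
    fix A assume "A \<in> sets (density M w \<bind> K)"
    then have A[measurable]: "A \<in> sets B" by (simp add: sets_bind_K)
    have "emeasure (density M w \<bind> K) A = (\<integral>\<^sup>+t. indicator A t \<partial>(density M w \<bind> K))"
      by (simp add: sets_bind_K)
    also have "\<dots> = (\<integral>\<^sup>+x. w x * emeasure (K x) A \<partial>M)"
      by (simp add: nn_integral_bind_density subprob_measurableD(2)[OF K] cong: nn_integral_cong)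
    also have "\<dots> = (\<integral>\<^sup>+x. v x * (\<integral>\<^sup>+t. g t * indicator A t \<partial>K x) \<partial>M)"
      by (rule eq[OF A])
    also have "\<dots> = (\<integral>\<^sup>+t. g t * indicator A t \<partial>(density M v \<bind> K))"
      by (simp add: nn_integral_bind_density)
    also have "\<dots> = emeasure (density (density M v \<bind> K) g) A"
      using A by (simp add: emeasure_density[OF g_bind] sets_bind_K)
    finally show "emeasure (density M w \<bind> K) A = emeasure (density (density M v \<bind> K) g) A" .
  qed
  then have "(\<integral>\<^sup>+t. F t \<partial>(density M w \<bind> K)) = (\<integral>\<^sup>+t. g t * F t \<partial>(density M v \<bind> K))"
    by (simp add: nn_integral_density[OF g_bind] measurable_cong_sets[OF sets_bind_K[of v] refl])
  then show ?thesis by (simp add: nn_integral_bind_density)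
qed

lemma sq_int_diff:
  assumes f: "sq_int M f" and g: "sq_int M g"
  shows "sq_int M (\<lambda>x. f x - g x)"
  unfolding sq_int_def
proof
  have [measurable]: "f \<in> borel_measurable M" "g \<in> borel_measurable M"
    using f g by (simp_all add: sq_int_def)
  then show "(\<lambda>x. f x - g x) \<in> borel_measurable M" by measurable
  show "integrable M (\<lambda>x. (norm (f x - g x))\<^sup>2)"
  proof (rule Bochner_Integration.integrable_bound)
    show "integrable M (\<lambda>x. 2 * (norm (f x))\<^sup>2 + 2 * (norm (g x))\<^sup>2)"
      using f g by (simp add: sq_int_def)
    show "AE x in M. norm ((norm (f x - g x))\<^sup>2) \<le> norm (2 * (norm (f x))\<^sup>2 + 2 * (norm (g x))\<^sup>2)"
    proof (rule AE_I2)
      fix x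
      have "(norm (f x - g x))\<^sup>2 \<le> (norm (f x) + norm (g x))\<^sup>2"
        by (intro power_mono norm_triangle_ineq4) simp
      also have "\<dots> \<le> 2 * (norm (f x))\<^sup>2 + 2 * (norm (g x))\<^sup>2"
        by (smt (verit) sum_squares_bound zero_le_power2 power2_sum)
      finally show "norm ((norm (f x - g x))\<^sup>2) \<le> norm (2 * (norm (f x))\<^sup>2 + 2 * (norm (g x))\<^sup>2)"
        by simp
    qed
  qed measurable
qed

lemma (in sigma_finite_measure) ex_finite_positive_subset:
  assumes A: "A \<in> sets M" "emeasure M A \<noteq> 0"
  obtains B where "B \<in> sets M" "B \<subseteq> A" "0 < emeasure M B" "emeasure M B < \<infinity>"
proof (cases "emeasure M A = \<infinity>")
  case True
  then show ?thesis using approx_PInf_emeasure_with_finite[OF A(1), of 0] that by auto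
next
  case False
  then show ?thesis using that[of A] A by (simp add: less_top zero_less_iff_neq_zero)
qed

text \<open>A set on which a dense subset of \<open>L\<^sup>2\<close> vanishes is null: otherwise the indicator of a
  positive finite-measure part of it stays at distance at least its measure from that subset.\<close>
lemma (in sigma_finite_measure) null_set_if_dense_vanishing:
  assumes A: "A \<in> sets M"
    and dense: "\<And>g \<epsilon>. sq_int M g \<Longrightarrow> 0 < \<epsilon> \<Longrightarrow>
      \<exists>f. sq_int M f \<and> (AE x in M. x \<in> A \<longrightarrow> f x = 0) \<and> (\<integral>x. (norm (f x - g x))\<^sup>2 \<partial>M) < \<epsilon>"
  shows "A \<in> null_sets M"
proof (rule ccontr)
  assume "A \<notin> null_sets M"
  then obtain B where B[measurable]: "B \<in> sets M" "B \<subseteq> A" "0 < emeasure M B" "emeasure M B < \<infinity>"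
    using ex_finite_positive_subset[OF A] A by auto
  define g where "g x = complex_of_real (indicator B x)" for x
  have int_B: "integrable M (indicator B :: 'a \<Rightarrow> real)"
    using B by (simp add: integrable_indicator_iff)
  have "(\<lambda>x. (norm (g x))\<^sup>2) = indicator B"
    by (auto simp: g_def indicator_def)
  moreover have "g \<in> borel_measurable M"
    unfolding g_def by measurable
  ultimately have "sq_int M g"
    using int_B by (simp add: sq_int_def)
  moreover have "0 < measure M B"
    using B by (simp add: measure_def enn2real_positive_iff less_top)
  ultimately obtain f where f: "sq_int M f" "AE x in M. x \<in> A \<longrightarrow> f x = 0"
      "(\<integral>x. (norm (f x - g x))\<^sup>2 \<partial>M) < measure M B"
    using dense by blast
  have "measure M B = (\<integral>x. indicator B x \<partial>M)" by simp
  also have "\<dots> \<le> (\<integral>x. (norm (f x - g x))\<^sup>2 \<partial>M)"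
  proof (rule integral_mono_AE[OF int_B])
    show "integrable M (\<lambda>x. (norm (f x - g x))\<^sup>2)"
      using sq_int_diff[OF f(1) \<open>sq_int M g\<close>] by (simp add: sq_int_def)
    show "AE x in M. indicator B x \<le> (norm (f x - g x))\<^sup>2"
      using f(2) by eventually_elim (use B(2) in \<open>auto simp: g_def indicator_def\<close>)
  qed
  finally show False using f(3) by simp
qed

lemma stieltjes_moment_seq_finite_moments:
  assumes sets: "sets \<nu> = sets borel_Rplus" and fin: "\<And>n. (\<integral>\<^sup>+t. ennreal (t ^ n) \<partial>\<nu>) < \<infinity>"
  shows "stieltjes_moment_seq (\<lambda>n. enn2real (\<integral>\<^sup>+t. ennreal (t ^ n) \<partial>\<nu>)) \<nu>"
  unfolding stieltjes_moment_seq_def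
proof (intro conjI allI sets)
  fix n
  have "(\<lambda>t::real. t ^ n) \<in> borel_measurable \<nu>"
    by (subst measurable_cong_sets[OF sets refl]) (intro measurable_restrict_space1, simp)
  moreover have nonneg: "AE t in \<nu>. 0 \<le> t ^ n"
    using sets_eq_imp_space_eq[OF sets] by (intro AE_I2) simp
  ultimately show int: "integrable \<nu> (\<lambda>t. t ^ n)"
    using fin by (rule integrableI_nonneg)
  show "enn2real (\<integral>\<^sup>+t. ennreal (t ^ n) \<partial>\<nu>) = (\<integral>t. t ^ n \<partial>\<nu>)"
    using nn_integral_eq_integral[OF int nonneg] integral_nonneg_AE[OF nonneg] by simp
qed

lemma nonsingular_measurable: "nonsingular M \<phi> \<Longrightarrow> \<phi> \<in> M \<rightarrow>\<^sub>M M"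
  by (simp add: nonsingular_def)

lemma density_hphi_1:
  assumes "sigma_finite_measure M" and ns: "nonsingular M \<phi>"
  shows "density M (hphi M \<phi> 1) = distr M M \<phi>"
proof -
  have "absolutely_continuous M (distr M M \<phi>)"
    using ns by (auto simp: absolutely_continuous_def nonsingular_def null_sets_def emeasure_distr)
  then show ?thesis
    unfolding hphi_def using sigma_finite_measure.density_RN_deriv[OF assms(1)] by simp
qed

lemma nn_integral_nonsingular_comp:
  assumes "sigma_finite_measure M" and ns: "nonsingular M \<phi>" and v: "v \<in> borel_measurable M"
  shows "(\<integral>\<^sup>+x. v (\<phi> x) \<partial>M) = (\<integral>\<^sup>+y. hphi M \<phi> 1 y * v y \<partial>M)"
proof -
  have "(\<integral>\<^sup>+x. v (\<phi> x) \<partial>M) = (\<integral>\<^sup>+y. v y \<partial>distr M M \<phi>)"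
    using nonsingular_measurable[OF ns] v by (simp add: nn_integral_distr)
  also have "\<dots> = (\<integral>\<^sup>+y. v y \<partial>density M (hphi M \<phi> 1))"
    by (simp only: density_hphi_1[OF assms(1,2)])
  also have "\<dots> = (\<integral>\<^sup>+y. hphi M \<phi> 1 y * v y \<partial>M)"
    by (rule nn_integral_density) (simp_all add: hphi_def v)
  finally show ?thesis .
qed

text \<open>Finiteness of \<open>h\<^sub>\<phi>\<close> makes \<open>\<phi>\<^sup>-\<^sup>1(\<A>)\<close> \<sigma>-finite, so the conditional expectation of the
  paper exists (as \<open>nn_cond_exp\<close>) and \<open>cond_exp_phi\<close> picks a version of it.\<close>
lemma is_cond_exp_phi_cond_exp_phi:
  assumes sf: "sigma_finite_measure M" and ns: "nonsingular M \<phi>"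
    and fin: "AE x in M. hphi M \<phi> 1 x < \<infinity>" and f: "f \<in> borel_measurable M"
  shows "is_cond_exp_phi M \<phi> f (cond_exp_phi M \<phi> f)"
proof -
  let ?F = "vimage_algebra (space M) \<phi> M"
  have \<phi>[measurable]: "\<phi> \<in> M \<rightarrow>\<^sub>M M" by (rule nonsingular_measurable[OF ns])
  have "sigma_finite_measure (density M (hphi M \<phi> 1))"
    using sigma_finite_measure.sigma_finite_iff_density_finite[OF sf] fin
    by (simp add: hphi_def less_top)
  then have "sigma_finite_measure (distr M M \<phi>)"
    by (simp only: density_hphi_1[OF sf ns])
  then interpret sigma_finite_subalgebra M ?F
    by (rule sigma_finite_subalgebra_vimage_algebra[OF \<phi>])
  have "is_cond_exp_phi M \<phi> f (nn_cond_exp M ?F f)"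
    unfolding is_cond_exp_phi_def
  proof (intro conjI ballI)
    fix u :: "'a \<Rightarrow> ennreal" assume u: "u \<in> borel_measurable M"
    have "\<phi> \<in> ?F \<rightarrow>\<^sub>M M"
      by (rule measurable_vimage_algebra1) (use measurable_space[OF \<phi>] in auto)
    then have "(\<lambda>x. u (\<phi> x)) \<in> borel_measurable ?F"
      using measurable_comp[OF _ u] unfolding comp_def by blast
    then show "(\<integral>\<^sup>+x. u (\<phi> x) * f x \<partial>M) = (\<integral>\<^sup>+x. u (\<phi> x) * nn_cond_exp M ?F f x \<partial>M)"
      by (rule nn_cond_exp_intg[OF _ f, symmetric])
  qed (rule borel_measurable_nn_cond_exp)
  then show ?thesis
    unfolding cond_exp_phi_def by (rule someI[of "is_cond_exp_phi M \<phi> f"])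
qed

context
  fixes M :: "'a measure" and \<phi> :: "'a \<Rightarrow> 'a" and P :: "'a \<Rightarrow> real measure"
  assumes sf: "sigma_finite_measure M"
    and ns: "nonsingular M \<phi>"
    and h_pos_fin: "AE x in M. 0 < hphi M \<phi> 1 x \<and> hphi M \<phi> 1 x < \<infinity>"
    and P_family: "measurable_prob_family M P"
    and CC: "\<forall>\<sigma>\<in>sets borel_Rplus. AE x in M.
               cond_exp_phi M \<phi> (\<lambda>y. emeasure (P y) \<sigma>) x =
               (\<integral>\<^sup>+ t. ennreal t * indicator \<sigma> t \<partial>(P (\<phi> x))) / hphi M \<phi> 1 (\<phi> x)"
begin

lemma sets_P: "x \<in> space M \<Longrightarrow> sets (P x) = sets borel_Rplus"
  using P_family by (simp add: measurable_prob_family_def)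

lemma space_P: "x \<in> space M \<Longrightarrow> space (P x) = {0..}"
  using sets_eq_imp_space_eq[OF sets_P] by simp

lemma P_measurable: "P \<in> M \<rightarrow>\<^sub>M subprob_algebra borel_Rplus"
  using P_family by (intro measurable_subprob_algebra)
    (auto simp: measurable_prob_family_def prob_space_imp_subprob_space)

lemma measurable_nn_integral_P[measurable]:
  "F \<in> borel_measurable borel_Rplus \<Longrightarrow> (\<lambda>x. \<integral>\<^sup>+t. F t \<partial>P x) \<in> borel_measurable M"
  using measurable_comp[OF P_measurable nn_integral_measurable_subprob_algebra] by (simp add: o_def)

lemma measurable_moment_P[measurable]: "(\<lambda>x. \<integral>\<^sup>+t. ennreal (t ^ n) \<partial>P x) \<in> borel_measurable M"
  by (intro measurable_nn_integral_P measurable_restrict_space1) simp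

lemma nn_integral_comp_phi_emeasure_P:
  assumes \<sigma>: "\<sigma> \<in> sets borel_Rplus" and u[measurable]: "u \<in> borel_measurable M"
  shows "(\<integral>\<^sup>+x. u (\<phi> x) * emeasure (P x) \<sigma> \<partial>M) =
    (\<integral>\<^sup>+y. u y * (\<integral>\<^sup>+t. ennreal t * indicator \<sigma> t \<partial>P y) \<partial>M)"
proof -
  let ?h = "hphi M \<phi> 1"
  define f where "f = (\<lambda>y. emeasure (P y) \<sigma>)"
  define I where "I y = (\<integral>\<^sup>+t. ennreal t * indicator \<sigma> t \<partial>P y)" for y
  have [measurable]: "\<phi> \<in> M \<rightarrow>\<^sub>M M" by (rule nonsingular_measurable[OF ns])
  have [measurable]: "f \<in> borel_measurable M"
    using P_family \<sigma> unfolding f_def measurable_prob_family_def by blast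
  have "(\<lambda>t. ennreal t * indicator \<sigma> t) \<in> borel_measurable borel_Rplus"
    using \<sigma> by (intro borel_measurable_times_ennreal measurable_restrict_space1[OF measurable_ennreal]
        borel_measurable_indicator)
  then have [measurable]: "I \<in> borel_measurable M"
    unfolding I_def by (rule measurable_nn_integral_P)
  have "(\<integral>\<^sup>+x. u (\<phi> x) * f x \<partial>M) = (\<integral>\<^sup>+x. u (\<phi> x) * cond_exp_phi M \<phi> f x \<partial>M)"
    using is_cond_exp_phi_cond_exp_phi[OF sf ns _ \<open>f \<in> borel_measurable M\<close>] h_pos_fin u
    by (simp add: is_cond_exp_phi_def eventually_mono)
  also have "\<dots> = (\<integral>\<^sup>+x. u (\<phi> x) * (I (\<phi> x) / ?h (\<phi> x)) \<partial>M)"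
  proof -
    have "AE x in M. cond_exp_phi M \<phi> f x = I (\<phi> x) / ?h (\<phi> x)"
      using bspec[OF CC \<sigma>] unfolding f_def I_def .
    then have "AE x in M. u (\<phi> x) * cond_exp_phi M \<phi> f x = u (\<phi> x) * (I (\<phi> x) / ?h (\<phi> x))"
      by eventually_elim simp
    then show ?thesis by (rule nn_integral_cong_AE)
  qed
  also have "\<dots> = (\<integral>\<^sup>+y. ?h y * (u y * (I y / ?h y)) \<partial>M)"
    by (intro nn_integral_nonsingular_comp[OF sf ns] borel_measurable_times_ennreal
        borel_measurable_divide_ennreal u) (simp_all add: \<open>I \<in> borel_measurable M\<close> hphi_def)
  also have "\<dots> = (\<integral>\<^sup>+y. u y * I y \<partial>M)"
  proof (rule nn_integral_cong_AE)
    show "AE y in M. ?h y * (u y * (I y / ?h y)) = u y * I y"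
      using h_pos_fin
    proof eventually_elim
      case (elim y)
      have "?h y * (I y / ?h y) = I y * ?h y / ?h y"
        by (simp add: ennreal_times_divide mult.commute)
      also have "\<dots> = I y"
        using elim by (intro ennreal_mult_divide_eq) auto
      finally have "?h y * (I y / ?h y) = I y" .
      then show ?case by (metis mult.left_commute)
    qed
  qed
  finally show ?thesis by (simp add: f_def I_def)
qed

lemma nn_integral_comp_phi_P:
  assumes u[measurable]: "u \<in> borel_measurable M" and F[measurable]: "F \<in> borel_measurable borel_Rplus"
  shows "(\<integral>\<^sup>+x. u (\<phi> x) * (\<integral>\<^sup>+t. F t \<partial>P x) \<partial>M) = (\<integral>\<^sup>+y. u y * (\<integral>\<^sup>+t. ennreal t * F t \<partial>P y) \<partial>M)"
proof (rule nn_integral_kernel_eqI[OF P_measurable _ u _ nn_integral_comp_phi_emeasure_P[OF _ u] F])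
  show "(\<lambda>x. u (\<phi> x)) \<in> borel_measurable M"
    using nonsingular_measurable[OF ns] by measurable
  show "(\<lambda>t. ennreal t) \<in> borel_measurable borel_Rplus"
    by (rule measurable_restrict_space1[OF measurable_ennreal])
qed

lemma nn_integral_comp_funpow:
  assumes u: "u \<in> borel_measurable M"
  shows "(\<integral>\<^sup>+x. u ((\<phi> ^^ n) x) \<partial>M) = (\<integral>\<^sup>+x. u x * (\<integral>\<^sup>+t. ennreal (t ^ n) \<partial>P x) \<partial>M)"
  using u
proof (induction n arbitrary: u)
  case 0
  have "(\<integral>\<^sup>+t. ennreal (t ^ 0) \<partial>P x) = 1" if "x \<in> space M" for x
    using P_family that by (simp add: measurable_prob_family_def prob_space.emeasure_space_1)
  then show ?case by (auto intro: nn_integral_cong)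
next
  case (Suc n)
  have [measurable]: "\<phi> \<in> M \<rightarrow>\<^sub>M M" "u \<in> borel_measurable M"
    by (rule nonsingular_measurable[OF ns]) (rule Suc.prems)
  have pow: "(\<lambda>t::real. ennreal (t ^ n)) \<in> borel_measurable borel_Rplus"
    by (intro measurable_restrict_space1) simp
  have "(\<integral>\<^sup>+x. u ((\<phi> ^^ Suc n) x) \<partial>M) = (\<integral>\<^sup>+x. u (\<phi> ((\<phi> ^^ n) x)) \<partial>M)"
    by simp
  also have "\<dots> = (\<integral>\<^sup>+x. u (\<phi> x) * (\<integral>\<^sup>+t. ennreal (t ^ n) \<partial>P x) \<partial>M)"
    by (rule Suc.IH) measurable
  also have "\<dots> = (\<integral>\<^sup>+y. u y * (\<integral>\<^sup>+t. ennreal t * ennreal (t ^ n) \<partial>P y) \<partial>M)"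
    by (rule nn_integral_comp_phi_P[OF _ pow]) measurable
  also have "\<dots> = (\<integral>\<^sup>+y. u y * (\<integral>\<^sup>+t. ennreal (t ^ Suc n) \<partial>P y) \<partial>M)"
    by (intro nn_integral_cong arg_cong2[where f="(*)"] refl)
      (auto simp: space_P ennreal_mult[symmetric])
  finally show ?case .
qed

lemma hphi_eq_moment: "AE x in M. hphi M \<phi> n x = (\<integral>\<^sup>+t. ennreal (t ^ n) \<partial>P x)"
proof -
  have [measurable]: "\<phi> ^^ n \<in> M \<rightarrow>\<^sub>M M"
    using nonsingular_measurable[OF ns] by measurable
  have "density M (\<lambda>x. \<integral>\<^sup>+t. ennreal (t ^ n) \<partial>P x) = distr M M (\<phi> ^^ n)"
  proof (rule measure_eqI)
    fix A assume "A \<in> sets (density M (\<lambda>x. \<integral>\<^sup>+t. ennreal (t ^ n) \<partial>P x))"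
    then have A[measurable]: "A \<in> sets M" by simp
    have "emeasure (distr M M (\<phi> ^^ n)) A = (\<integral>\<^sup>+x. indicator A x \<partial>distr M M (\<phi> ^^ n))"
      by simp
    also have "\<dots> = (\<integral>\<^sup>+x. indicator A ((\<phi> ^^ n) x) \<partial>M)"
      by (rule nn_integral_distr) measurable
    also have "\<dots> = (\<integral>\<^sup>+x. (\<integral>\<^sup>+t. ennreal (t ^ n) \<partial>P x) * indicator A x \<partial>M)"
      by (simp add: nn_integral_comp_funpow mult.commute)
    finally show "emeasure (density M (\<lambda>x. \<integral>\<^sup>+t. ennreal (t ^ n) \<partial>P x)) A = emeasure (distr M M (\<phi> ^^ n)) A"
      by (simp add: emeasure_density)
  qed simp
  then have "AE x in M. (\<integral>\<^sup>+t. ennreal (t ^ n) \<partial>P x) = hphi M \<phi> n x"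
    unfolding hphi_def by (rule sigma_finite_measure.RN_deriv_unique[OF sf measurable_moment_P])
  then show ?thesis by (simp add: eq_commute)
qed

lemma dom_Cphi_pow_vanishes_where_moment_infinite:
  assumes "f \<in> dom_Cphi_pow M \<phi> n"
  shows "AE x in M. (\<integral>\<^sup>+t. ennreal (t ^ n) \<partial>P x) = \<infinity> \<longrightarrow> f x = 0"
proof -
  have [measurable]: "f \<in> borel_measurable M" and "integrable M (\<lambda>x. (norm (f ((\<phi> ^^ n) x)))\<^sup>2)"
    using assms by (auto simp: dom_Cphi_pow_def sq_int_def)
  then have "(\<integral>\<^sup>+x. ennreal ((norm (f ((\<phi> ^^ n) x)))\<^sup>2) \<partial>M) \<noteq> \<infinity>"
    by (simp add: integrable_iff_bounded less_top)
  moreover have "(\<integral>\<^sup>+x. ennreal ((norm (f ((\<phi> ^^ n) x)))\<^sup>2) \<partial>M) =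
      (\<integral>\<^sup>+x. ennreal ((norm (f x))\<^sup>2) * (\<integral>\<^sup>+t. ennreal (t ^ n) \<partial>P x) \<partial>M)"
    by (rule nn_integral_comp_funpow[of "\<lambda>x. ennreal ((norm (f x))\<^sup>2)"]) measurable
  ultimately have "AE x in M. ennreal ((norm (f x))\<^sup>2) * (\<integral>\<^sup>+t. ennreal (t ^ n) \<partial>P x) \<noteq> \<infinity>"
    by (intro nn_integral_PInf_AE) auto
  then show ?thesis
    by eventually_elim (auto simp: ennreal_mult_eq_top_iff)
qed

lemma moment_finite_if_densely_defined:
  assumes dense: "Cphi_pow_densely_defined M \<phi> n"
  shows "AE x in M. (\<integral>\<^sup>+t. ennreal (t ^ n) \<partial>P x) < \<infinity>"
proof -
  define A where "A = {x \<in> space M. (\<integral>\<^sup>+t. ennreal (t ^ n) \<partial>P x) = \<infinity>}"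
  have A: "A \<in> sets M"
    unfolding A_def by measurable
  have "A \<in> null_sets M"
  proof (rule sigma_finite_measure.null_set_if_dense_vanishing[OF sf A])
    fix g :: "'a \<Rightarrow> complex" and \<epsilon> :: real assume "sq_int M g" "0 < \<epsilon>"
    then obtain f where "f \<in> dom_Cphi_pow M \<phi> n" "(\<integral>x. (norm (f x - g x))\<^sup>2 \<partial>M) < \<epsilon>"
      using dense by (auto simp: Cphi_pow_densely_defined_def)
    then show "\<exists>f. sq_int M f \<and> (AE x in M. x \<in> A \<longrightarrow> f x = 0) \<and> (\<integral>x. (norm (f x - g x))\<^sup>2 \<partial>M) < \<epsilon>"
      using dom_Cphi_pow_vanishes_where_moment_infinite
      by (intro exI[of _ f]) (auto simp: dom_Cphi_pow_def A_def)
  qed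
  then have "AE x in M. x \<notin> A" by (rule AE_not_in)
  with AE_space show ?thesis by eventually_elim (auto simp: A_def less_top)
qed

lemma stieltjes_moment_seq_hphi:
  assumes dense: "\<And>n. Cphi_pow_densely_defined M \<phi> n"
  shows "AE x in M. (\<forall>n. hphi M \<phi> n x < \<infinity>) \<and>
    stieltjes_moment_seq (\<lambda>n. enn2real (hphi M \<phi> n x)) (P x)"
proof -
  have "AE x in M. \<forall>n. hphi M \<phi> n x = (\<integral>\<^sup>+t. ennreal (t ^ n) \<partial>P x)"
    using hphi_eq_moment by (simp add: AE_all_countable)
  moreover have "AE x in M. \<forall>n. (\<integral>\<^sup>+t. ennreal (t ^ n) \<partial>P x) < \<infinity>"
    using moment_finite_if_densely_defined[OF dense] by (simp add: AE_all_countable)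
  ultimately show ?thesis
    using AE_space by eventually_elim (simp add: stieltjes_moment_seq_finite_moments sets_P)
qed

end

theorem theorem17:
  fixes M :: "'a measure" and \<phi> :: "'a \<Rightarrow> 'a" and P :: "'a \<Rightarrow> real measure"
  assumes "sigma_finite_measure M"
    and "nonsingular M \<phi>"
    and "AE x in M. 0 < hphi M \<phi> 1 x \<and> hphi M \<phi> 1 x < \<infinity>"
    and "measurable_prob_family M P"
    and CC: "\<forall>\<sigma>\<in>sets borel_Rplus. AE x in M.
               cond_exp_phi M \<phi> (\<lambda>y. emeasure (P y) \<sigma>) x =
               (\<integral>\<^sup>+ t. ennreal t * indicator \<sigma> t \<partial>(P (\<phi> x))) / hphi M \<phi> 1 (\<phi> x)"
  shows "(\<forall>n. AE x in M. hphi M \<phi> n x = (\<integral>\<^sup>+ t. ennreal (t ^ n) \<partial>(P x))) \<and>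
         ((\<forall>n. Cphi_pow_densely_defined M \<phi> n) \<longrightarrow>
           (AE x in M. (\<forall>n. hphi M \<phi> n x < \<infinity>) \<and>
              stieltjes_moment_seq (\<lambda>n. enn2real (hphi M \<phi> n x)) (P x)))"
  using hphi_eq_moment[OF assms] stieltjes_moment_seq_hphi[OF assms] by blast

end
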